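(* Let $G$ be a connected cograph which is $k$-connected, and let $S$ be a minimal vertex separator of $G$ with $|S|=k$. Let $G_1,G_2,\ldots,G_m$, $m\geq 2$, be the connected components of $G\setminus S$. Then for every edge $\{u,v\}$ lying in a non-trivial component $G_i$ (i.e. one with at least two vertices), $N_G(u)\cap S=N_G(v)\cap S$.
   Context: A cograph is a graph that can be built from single vertices by repeatedly taking disjoint unions and joins; equivalently, a graph with no induced path on four vertices. Graphs are finite, simple, undirected. $N_G(v)$ is the set of neighbours of $v$ in $G$, and $G\setminus S$ is the subgraph induced on $V(G)\setminus S$. A vertex separator of a connected graph $G$ is a set $S\subset V(G)$ such that $G\setminus S$ is disconnected; it is minimal if no proper subset of $S$ is a vertex separator; a minimum vertex separator is a minimal vertex separator of least size. The paper calls $G$ $k$-connected if there exists a minimum vertex separator of size $k$ (i.e. the least size of a vertex separator is exactly $k$). A component is trivial if it has exactly one vertex. *)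

theory Defs
  imports Main
begin

definition sgraph :: "'a set \<Rightarrow> ('a \<Rightarrow> 'a \<Rightarrow> bool) \<Rightarrow> bool" where
  "sgraph V E \<longleftrightarrow> finite V \<and> (\<forall>x y. E x y \<longrightarrow> x \<in> V \<and> y \<in> V \<and> x \<noteq> y \<and> E y x)"

definition nbr :: "('a \<Rightarrow> 'a \<Rightarrow> bool) \<Rightarrow> 'a \<Rightarrow> 'a set" where
  "nbr E v = {w. E v w}"

definition connected_on :: "('a \<Rightarrow> 'a \<Rightarrow> bool) \<Rightarrow> 'a set \<Rightarrow> bool" where
  "connected_on E X \<longleftrightarrow> X \<noteq> {} \<and>
     (\<forall>x\<in>X. \<forall>y\<in>X. (\<lambda>a b. E a b \<and> a \<in> X \<and> b \<in> X)\<^sup>*\<^sup>* x y)"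

definition component :: "('a \<Rightarrow> 'a \<Rightarrow> bool) \<Rightarrow> 'a set \<Rightarrow> 'a set \<Rightarrow> bool" where
  "component E X C \<longleftrightarrow> C \<subseteq> X \<and> connected_on E C \<and>
     (\<forall>C'. C \<subseteq> C' \<and> C' \<subseteq> X \<and> connected_on E C' \<longrightarrow> C' = C)"

definition cograph :: "'a set \<Rightarrow> ('a \<Rightarrow> 'a \<Rightarrow> bool) \<Rightarrow> bool" where
  "cograph V E \<longleftrightarrow> sgraph V E \<and>
     \<not> (\<exists>a b c d. a \<in> V \<and> b \<in> V \<and> c \<in> V \<and> d \<in> V \<and> distinct [a, b, c, d] \<and>
          E a b \<and> E b c \<and> E c d \<and> \<not> E a c \<and> \<not> E a d \<and> \<not> E b d)"

definition vertex_separator :: "'a set \<Rightarrow> ('a \<Rightarrow> 'a \<Rightarrow> bool) \<Rightarrow> 'a set \<Rightarrow> bool" where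
  "vertex_separator V E S \<longleftrightarrow> S \<subset> V \<and> V - S \<noteq> {} \<and> \<not> connected_on E (V - S)"

definition minimal_separator :: "'a set \<Rightarrow> ('a \<Rightarrow> 'a \<Rightarrow> bool) \<Rightarrow> 'a set \<Rightarrow> bool" where
  "minimal_separator V E S \<longleftrightarrow> vertex_separator V E S \<and>
     (\<forall>T. T \<subset> S \<longrightarrow> \<not> vertex_separator V E T)"

definition minimum_separator :: "'a set \<Rightarrow> ('a \<Rightarrow> 'a \<Rightarrow> bool) \<Rightarrow> 'a set \<Rightarrow> bool" where
  "minimum_separator V E S \<longleftrightarrow> minimal_separator V E S \<and>
     (\<forall>T. minimal_separator V E T \<longrightarrow> card S \<le> card T)"

text \<open>The paper's k-connectedness: there is a minimum vertex separator of size k.\<close>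
definition k_connected :: "'a set \<Rightarrow> ('a \<Rightarrow> 'a \<Rightarrow> bool) \<Rightarrow> nat \<Rightarrow> bool" where
  "k_connected V E k \<longleftrightarrow> (\<exists>S. minimum_separator V E S \<and> card S = k)"

end

theory Submission
  imports Defs
begin

text \<open>
  Suppose \<open>s \<in> S\<close> is adjacent to \<open>w\<close> but not to \<open>w'\<close>, where \<open>w w'\<close> is an edge of the
  component \<open>C\<close>. Since \<open>S - {s}\<close> does not separate, \<open>s\<close> must have a neighbour \<open>z\<close> in
  \<open>V - S\<close> outside \<open>C\<close>: otherwise the vertices of \<open>V - S\<close> outside \<open>C\<close> would still be cut
  off from \<open>s\<close>. As there are no edges between \<open>C\<close> and \<open>z\<close>, the path \<open>w' w s z\<close> is an
  induced \<open>P\<^sub>4\<close>, which a cograph does not contain.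
\<close>

lemma sgraph_symp: "sgraph V E \<Longrightarrow> symp E"
  unfolding sgraph_def by (auto intro: sympI)

lemma sgraph_edgeD: "sgraph V E \<Longrightarrow> E x y \<Longrightarrow> x \<in> V \<and> y \<in> V \<and> x \<noteq> y"
  unfolding sgraph_def by auto

lemma connected_on_insert:
  assumes conn: "connected_on E C" and "symp E" and c: "c \<in> C" and "E c y"
  shows "connected_on E (insert y C)"
proof -
  let ?R = "\<lambda>a b. E a b \<and> a \<in> insert y C \<and> b \<in> insert y C"
  have inC: "?R\<^sup>*\<^sup>* a b" if "a \<in> C" "b \<in> C" for a b
  proof -
    have "(\<lambda>a b. E a b \<and> a \<in> C \<and> b \<in> C)\<^sup>*\<^sup>* a b"
      using conn that unfolding connected_on_def by blast
    then show ?thesis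
      by (rule rtranclp_mono[THEN predicate2D, rotated]) auto
  qed
  have cy: "?R c y" and yc: "?R y c"
    using \<open>E c y\<close> \<open>symp E\<close> c by (auto dest: sympD)
  have from_y: "?R\<^sup>*\<^sup>* y b" if "b \<in> C" for b
    using yc inC[OF c that] by (rule converse_rtranclp_into_rtranclp)
  have to_y: "?R\<^sup>*\<^sup>* a y" if "a \<in> C" for a
    using inC[OF that c] cy by (rule rtranclp.rtrancl_into_rtrancl)
  have "?R\<^sup>*\<^sup>* a b" if "a \<in> insert y C" "b \<in> insert y C" for a b
    using that inC from_y to_y by blast
  then show ?thesis
    unfolding connected_on_def by blast
qed

lemma component_edge_closed:
  assumes "component E X C" and "symp E" and "c \<in> C" and "y \<in> X" and "E c y"
  shows "y \<in> C"
proof -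
  have "connected_on E (insert y C)"
    using assms by (intro connected_on_insert) (auto simp: component_def)
  then have "insert y C = C"
    using assms unfolding component_def by blast
  then show ?thesis by blast
qed

lemma connected_on_closed_subset:
  assumes conn: "connected_on E X" and "a \<in> Y" and "Y \<subseteq> X"
    and closed: "\<And>p q. E p q \<Longrightarrow> p \<in> Y \<Longrightarrow> q \<in> X \<Longrightarrow> q \<in> Y"
  shows "X \<subseteq> Y"
proof
  fix b assume "b \<in> X"
  then have "(\<lambda>p q. E p q \<and> p \<in> X \<and> q \<in> X)\<^sup>*\<^sup>* a b"
    using conn \<open>a \<in> Y\<close> \<open>Y \<subseteq> X\<close> unfolding connected_on_def by blast
  then show "b \<in> Y"
    by (induction rule: rtranclp_induct) (use \<open>a \<in> Y\<close> closed in blast)+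
qed

lemma minimal_separator_nbr_outside_component:
  assumes min: "minimal_separator V E S" and "symp E" and "s \<in> S"
    and comp: "component E (V - S) C"
  shows "\<exists>z \<in> V - S - C. E s z"
proof (rule ccontr)
  assume no_nbr: "\<not> ?thesis"
  have sep: "vertex_separator V E S"
    using min unfolding minimal_separator_def by blast
  have C: "C \<subseteq> V - S" "connected_on E C"
    using comp unfolding component_def by auto
  have "C \<noteq> V - S"
    using sep C(2) unfolding vertex_separator_def by blast
  then obtain x where x: "x \<in> V - S - C"
    using C(1) by blast
  let ?X = "V - (S - {s})"
  have "\<not> vertex_separator V E (S - {s})"
    using min \<open>s \<in> S\<close> unfolding minimal_separator_def by blast
  moreover have "S \<subset> V"
    using sep unfolding vertex_separator_def by blast
  then have "S - {s} \<subset> V" "?X \<noteq> {}" "s \<in> ?X"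
    using \<open>s \<in> S\<close> by auto
  ultimately have conn: "connected_on E ?X"
    unfolding vertex_separator_def by blast
  have closed: "q \<in> V - S - C" if "E p q" "p \<in> V - S - C" "q \<in> ?X" for p q
  proof -
    have "E q p"
      using \<open>symp E\<close> \<open>E p q\<close> by (rule sympD)
    then have "q \<noteq> s"
      using no_nbr that(2) by blast
    moreover have "q \<notin> C"
      using component_edge_closed[OF comp \<open>symp E\<close> _ _ \<open>E q p\<close>] that(2) by blast
    ultimately show ?thesis
      using that(3) by blast
  qed
  have "?X \<subseteq> V - S - C"
    by (rule connected_on_closed_subset[OF conn x]) (blast, fact closed)
  with \<open>s \<in> ?X\<close> \<open>s \<in> S\<close> show False
    by blast
qed

lemma cograph_minimal_separator_nbr:
  assumes cog: "cograph V E" and min: "minimal_separator V E S"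
    and comp: "component E (V - S) C"
    and "w \<in> C" "w' \<in> C" "E w w'" and "s \<in> S" "E w s"
  shows "E w' s"
proof (rule ccontr)
  assume "\<not> E w' s"
  have sg: "sgraph V E" and sym: "symp E"
    using cog sgraph_symp unfolding cograph_def by blast+
  obtain z where z: "z \<in> V - S - C" "E s z"
    using minimal_separator_nbr_outside_component[OF min sym \<open>s \<in> S\<close> comp] by blast
  have "C \<subseteq> V - S"
    using comp unfolding component_def by blast
  have "\<not> E w z" "\<not> E w' z"
    using z component_edge_closed[OF comp sym] \<open>w \<in> C\<close> \<open>w' \<in> C\<close> by blast+
  moreover have "w' \<in> V" "w \<in> V" "s \<in> V" "z \<in> V" "distinct [w', w, s, z]"
    using sgraph_edgeD[OF sg] \<open>E w w'\<close> \<open>E w s\<close> \<open>E s z\<close> \<open>C \<subseteq> V - S\<close>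
      \<open>w \<in> C\<close> \<open>w' \<in> C\<close> \<open>s \<in> S\<close> z(1)
    by auto
  moreover have "E w' w"
    using sym \<open>E w w'\<close> by (rule sympD)
  ultimately show False
    using cog \<open>E w s\<close> \<open>E s z\<close> \<open>\<not> E w' s\<close> unfolding cograph_def by blast
qed

theorem lemma1:
  fixes V :: "'a set" and E :: "'a \<Rightarrow> 'a \<Rightarrow> bool" and S :: "'a set" and k :: nat
  assumes "cograph V E"
    and "connected_on E V"
    and "k_connected V E k"
    and "minimal_separator V E S"
    and "card S = k"
    and "component E (V - S) C"
    and "card C \<ge> 2"
    and "u \<in> C" and "v \<in> C" and "E u v"
  shows "nbr E u \<inter> S = nbr E v \<inter> S"
proof -
  have "E v u"
    using assms(1,10) sgraph_symp unfolding cograph_def by (blast dest: sympD)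
  then show ?thesis
    using cograph_minimal_separator_nbr[OF assms(1,4,6)] assms(8-10)
    unfolding nbr_def by blast
qed

end
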